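(* If $n\ge 1$ and $k\ge 2$ are integers, then the radius of the $k$-Pell graph $\Pi_{n,k}$ is $$\operatorname{rad}(\Pi_{n,k})=\left\lfloor \frac{kn}{2}\right\rfloor.$$
   Context: For an integer $k\ge 2$, a $k$-Pell string is a finite word over the alphabet $\{0,1,\ldots,k-1,kk\}$, i.e. a word over $\{0,1,\ldots,k\}$ in which every maximal run of the letter $k$ has even length. For $n\ge 0$, the $k$-Pell graph $\Pi_{n,k}$ has as vertices all $k$-Pell strings of length $n$, and two vertices are adjacent if one is obtained from the other either by replacing a single letter $i$ by $i+1$ (or vice versa) for some $i\in\{0,1,\ldots,k-2\}$, or by replacing one factor $(k-1)(k-1)$ by $kk$ (or vice versa), in such a way that the resulting string is again a $k$-Pell string. The radius is the minimum eccentricity of a vertex with respect to the shortest-path distance. *)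

theory Defs
  imports Main
begin

text \<open>k-Pell strings: words over {0,...,k} (as nat lists) which factor into
  the tokens 0,1,...,k-1 and kk, i.e. every maximal run of k has even length.\<close>
inductive pell_string :: "nat \<Rightarrow> nat list \<Rightarrow> bool" for k :: nat where
  Nil: "pell_string k []"
| Small: "i < k \<Longrightarrow> pell_string k xs \<Longrightarrow> pell_string k (i # xs)"
| KK: "pell_string k xs \<Longrightarrow> pell_string k (k # k # xs)"

definition pell_vertices :: "nat \<Rightarrow> nat \<Rightarrow> nat list set" where
  "pell_vertices n k = {xs. length xs = n \<and> pell_string k xs}"

definition pell_move :: "nat \<Rightarrow> nat list \<Rightarrow> nat list \<Rightarrow> bool" where
  "pell_move k u v \<longleftrightarrow>
     (\<exists>a b i. i + 2 \<le> k \<and> u = a @ [i] @ b \<and> v = a @ [i + 1] @ b) \<or>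
     (\<exists>a b. u = a @ [k - 1, k - 1] @ b \<and> v = a @ [k, k] @ b)"

definition pell_adj :: "nat \<Rightarrow> nat \<Rightarrow> nat list \<Rightarrow> nat list \<Rightarrow> bool" where
  "pell_adj n k u v \<longleftrightarrow> u \<in> pell_vertices n k \<and> v \<in> pell_vertices n k \<and>
     (pell_move k u v \<or> pell_move k v u)"

definition pell_dist :: "nat \<Rightarrow> nat \<Rightarrow> nat list \<Rightarrow> nat list \<Rightarrow> nat" where
  "pell_dist n k u v = (LEAST m. (pell_adj n k ^^ m) u v)"

definition pell_ecc :: "nat \<Rightarrow> nat \<Rightarrow> nat list \<Rightarrow> nat" where
  "pell_ecc n k u = Max ((\<lambda>v. pell_dist n k u v) ` pell_vertices n k)"

definition pell_radius :: "nat \<Rightarrow> nat \<Rightarrow> nat" where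
  "pell_radius n k = Min (pell_ecc n k ` pell_vertices n k)"

end

(*
  The constant string c = (k div 2)^n reaches every vertex token by token: a letter i costs
  |i - k div 2| <= k/2 steps, and a token kk costs 2 (k - 1 - k div 2) + 1 <= k steps (walk both
  letters up to k - 1, then replace (k-1)(k-1) by kk). Hence ecc c <= floor (kn/2).

  Conversely, weight the letters by w i = 2 i for i < k and w k = 2 k - 1. Every edge changes the
  weight vector by at most 2 in l1-norm, so d u v >= |w u - w v|_1 / 2. Every vertex u has an
  antipode, assembled from blocks 00 and kk, at weight distance at least k n - 1, so every
  eccentricity is at least floor (kn/2).
*)

theory Submission
  imports Defs
begin

lemma relpowp_symp: "symp R \<Longrightarrow> (R ^^ m) x y \<Longrightarrow> (R ^^ m) y x"
proof (induction m arbitrary: y)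
  case (Suc m)
  then obtain z where "(R ^^ m) x z" "R z y" by (blast elim: relpowp_Suc_E)
  with Suc show ?case by (meson relpowp_Suc_I2 sympD)
qed simp

lemma relpowp_map:
  "(\<And>x y. R x y \<Longrightarrow> S (f x) (f y)) \<Longrightarrow> (R ^^ m) x y \<Longrightarrow> (S ^^ m) (f x) (f y)"
  by (induction m arbitrary: y) (auto elim!: relpowp_Suc_E intro: relpowp_Suc_I)

lemma pell_string_append: "pell_string k xs \<Longrightarrow> pell_string k ys \<Longrightarrow> pell_string k (xs @ ys)"
  by (induction xs rule: pell_string.induct) (auto intro: pell_string.intros)

lemma pell_string_replicate: "c < k \<Longrightarrow> pell_string k (replicate n c)"
  by (induction n) (auto intro: pell_string.intros)

lemma pell_string_letters_le: "pell_string k xs \<Longrightarrow> set xs \<subseteq> {..k}"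
  by (induction xs rule: pell_string.induct) auto

lemma pell_string_Cons_Cons_cases:
  assumes "pell_string k (x # y # r)"
  obtains "x = k" "y = k" "pell_string k r"
    | r' where "x < k" "y = k" "r = k # r'" "pell_string k r'"
    | "x < k" "y < k" "pell_string k r"
  using assms
proof (cases rule: pell_string.cases)
  case Small
  then have "pell_string k (y # r)" by simp
  then show ?thesis by (cases rule: pell_string.cases) (use Small that in auto)
qed (use that in auto)

lemma finite_pell_vertices: "finite (pell_vertices n k)"
proof (rule finite_subset)
  show "pell_vertices n k \<subseteq> {xs. set xs \<subseteq> {..k} \<and> length xs = n}"
    unfolding pell_vertices_def using pell_string_letters_le by auto
qed (simp add: finite_lists_length_eq)

lemma pell_move_append: "pell_move k u v \<Longrightarrow> pell_move k (w @ u @ w') (w @ v @ w')"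
  unfolding pell_move_def by (elim disjE exE conjE) (metis append.assoc)+

lemma symp_pell_adj: "symp (pell_adj n k)"
  unfolding pell_adj_def by (auto intro: sympI)

lemma pell_adj_append:
  assumes "pell_adj n k u v" "pell_string k w" "pell_string k w'"
  shows "pell_adj (length w + n + length w') k (w @ u @ w') (w @ v @ w')"
  using assms pell_move_append unfolding pell_adj_def pell_vertices_def
  by (auto intro!: pell_string_append)

lemma pell_walk_vertex:
  "(pell_adj n k ^^ m) u v \<Longrightarrow> u \<in> pell_vertices n k \<Longrightarrow> v \<in> pell_vertices n k"
  by (cases m) (auto simp: pell_adj_def elim: relpowp_Suc_E)

lemma pell_walk_append:
  assumes "(pell_adj n k ^^ a) u v" "(pell_adj n' k ^^ b) u' v'"
    and "u \<in> pell_vertices n k" "u' \<in> pell_vertices n' k"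
  shows "(pell_adj (n + n') k ^^ (a + b)) (u @ u') (v @ v')"
proof -
  have "pell_string k u'" "length u' = n'" "pell_string k v" "length v = n"
    using assms pell_walk_vertex unfolding pell_vertices_def by blast+
  have "(pell_adj (n + n') k ^^ a) (u @ u') (v @ u')"
    by (rule relpowp_map[OF _ assms(1)])
      (use pell_adj_append[of n k _ _ "[]" u'] \<open>pell_string k u'\<close> \<open>length u' = n'\<close> pell_string.Nil in simp)
  moreover have "(pell_adj (n + n') k ^^ b) (v @ u') (v @ v')"
    by (rule relpowp_map[OF _ assms(2)])
      (use pell_adj_append[of n' k _ _ v "[]"] \<open>pell_string k v\<close> \<open>length v = n\<close> pell_string.Nil in simp)
  ultimately show ?thesis by (rule relpowp_trans)
qed

lemma pell_dist_le: "(pell_adj n k ^^ m) u v \<Longrightarrow> pell_dist n k u v \<le> m"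
  unfolding pell_dist_def by (rule Least_le)

lemma pell_walk_pell_dist:
  "(pell_adj n k ^^ m) u v \<Longrightarrow> (pell_adj n k ^^ pell_dist n k u v) u v"
  unfolding pell_dist_def by (rule LeastI)

lemma pell_adj_letter_Suc:
  assumes "Suc i < k"
  shows "pell_adj 1 k [i] [Suc i]"
proof -
  have "pell_move k [i] [Suc i]"
    unfolding pell_move_def using assms
    by (intro disjI1 exI[of _ "[]"] exI[of _ "[]"] exI[of _ i]) simp
  then show ?thesis
    using assms unfolding pell_adj_def pell_vertices_def by (auto intro!: pell_string.intros)
qed

lemma pell_walk_letter_up: "c \<le> b \<Longrightarrow> b < k \<Longrightarrow> (pell_adj 1 k ^^ (b - c)) [c] [b]"
proof (induction b)
  case (Suc b)
  show ?case
  proof (cases "c = Suc b")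
    case False
    then have "(pell_adj 1 k ^^ (b - c)) [c] [b]" using Suc by simp
    moreover have "pell_adj 1 k [b] [Suc b]" using Suc.prems by (intro pell_adj_letter_Suc)
    ultimately have "(pell_adj 1 k ^^ Suc (b - c)) [c] [Suc b]" by (rule relpowp_Suc_I)
    then show ?thesis using False Suc.prems by (simp add: Suc_diff_le)
  qed simp
qed simp

lemma pell_walk_letter:
  "c < k \<Longrightarrow> b < k \<Longrightarrow> (pell_adj 1 k ^^ (max b c - min b c)) [c] [b]"
  using pell_walk_letter_up[of c b k] pell_walk_letter_up[of b c k] relpowp_symp[OF symp_pell_adj]
  by (cases "c \<le> b") (auto simp: max_def min_def)

lemma pell_walk_to_kk:
  assumes "c < k"
  shows "(pell_adj 2 k ^^ (2 * (k - 1 - c) + 1)) [c, c] [k, k]"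
proof -
  have "[c] \<in> pell_vertices 1 k"
    using assms unfolding pell_vertices_def by (auto intro: pell_string.intros)
  moreover have "(pell_adj 1 k ^^ (k - 1 - c)) [c] [k - 1]"
    using pell_walk_letter[of c k "k - 1"] assms by simp
  ultimately have "(pell_adj (1 + 1) k ^^ ((k - 1 - c) + (k - 1 - c))) ([c] @ [c]) ([k - 1] @ [k - 1])"
    by (intro pell_walk_append)
  then have "(pell_adj 2 k ^^ (2 * (k - 1 - c))) [c, c] [k - 1, k - 1]"
    unfolding one_add_one mult_2 by simp
  moreover have "pell_move k [k - 1, k - 1] [k, k]"
    unfolding pell_move_def by (intro disjI2 exI[of _ "[]"]) simp
  then have "pell_adj 2 k [k - 1, k - 1] [k, k]"
    using assms unfolding pell_adj_def pell_vertices_def by (auto intro!: pell_string.intros)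
  ultimately show ?thesis by (rule relpowp_Suc_I[unfolded Suc_eq_plus1])
qed

lemma pell_walk_from_center:
  assumes "pell_string k v" "0 < k"
  shows "\<exists>m. (pell_adj (length v) k ^^ m) (replicate (length v) (k div 2)) v \<and> 2 * m \<le> k * length v"
  using assms
proof (induction v rule: pell_string.induct)
  case Nil
  then show ?case by auto
next
  case (Small i xs)
  let ?c = "k div 2"
  define d where "d = max i ?c - min i ?c"
  obtain m where m: "(pell_adj (length xs) k ^^ m) (replicate (length xs) ?c) xs"
    "2 * m \<le> k * length xs" using Small by blast
  have "?c < k" using Small.hyps by simp
  then have "(pell_adj (1 + length xs) k ^^ (d + m)) ([?c] @ replicate (length xs) ?c) ([i] @ xs)"
    using pell_walk_letter[of ?c k i] Small.hyps m(1) unfolding d_def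
    by (intro pell_walk_append) (auto simp: pell_vertices_def intro: pell_string.intros pell_string_replicate)
  moreover have "2 * d \<le> k" using Small.hyps unfolding d_def by linarith
  ultimately show ?case using m(2) by (intro exI[of _ "d + m"]) auto
next
  case (KK xs)
  let ?c = "k div 2"
  define d where "d = 2 * (k - 1 - ?c) + 1"
  obtain m where m: "(pell_adj (length xs) k ^^ m) (replicate (length xs) ?c) xs"
    "2 * m \<le> k * length xs" using KK by blast
  have "?c < k" using KK.prems by simp
  then have "(pell_adj (2 + length xs) k ^^ (d + m)) ([?c, ?c] @ replicate (length xs) ?c) ([k, k] @ xs)"
    using pell_walk_to_kk[of ?c k] KK.hyps m(1) unfolding d_def
    by (intro pell_walk_append) (auto simp: pell_vertices_def intro!: pell_string.intros pell_string_replicate)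
  moreover have "d \<le> k" using KK.prems unfolding d_def by linarith
  ultimately show ?case using m(2) by (intro exI[of _ "d + m"]) (auto simp: numeral_2_eq_2)
qed

lemma pell_walk_exists:
  assumes "u \<in> pell_vertices n k" "v \<in> pell_vertices n k" "0 < k"
  shows "\<exists>m. (pell_adj n k ^^ m) u v"
proof -
  have "\<exists>m. (pell_adj n k ^^ m) (replicate n (k div 2)) w" if "w \<in> pell_vertices n k" for w
    using pell_walk_from_center[of k w] that assms(3) unfolding pell_vertices_def by auto
  then obtain a b where "(pell_adj n k ^^ a) u (replicate n (k div 2))"
    "(pell_adj n k ^^ b) (replicate n (k div 2)) v"
    using assms relpowp_symp[OF symp_pell_adj] by meson
  then show ?thesis using relpowp_trans by metis
qed

lemma pell_ecc_center_le:
  assumes "0 < k"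
  shows "pell_ecc n k (replicate n (k div 2)) \<le> k * n div 2"
proof -
  have "pell_dist n k (replicate n (k div 2)) v \<le> k * n div 2" if v: "v \<in> pell_vertices n k" for v
  proof -
    obtain m where "(pell_adj n k ^^ m) (replicate n (k div 2)) v" "2 * m \<le> k * n"
      using pell_walk_from_center[of k v] v assms unfolding pell_vertices_def by auto
    then show ?thesis using pell_dist_le by fastforce
  qed
  moreover have "replicate n (k div 2) \<in> pell_vertices n k"
    using assms unfolding pell_vertices_def by (simp add: pell_string_replicate)
  ultimately show ?thesis
    unfolding pell_ecc_def using finite_pell_vertices by (subst Max_le_iff) auto
qed

definition pell_weight :: "nat \<Rightarrow> nat \<Rightarrow> int" where
  "pell_weight k x = (if x = k then 2 * int k - 1 else 2 * int x)"

fun weight_dist :: "nat \<Rightarrow> nat list \<Rightarrow> nat list \<Rightarrow> int" where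
  "weight_dist k (x # xs) (y # ys) = \<bar>pell_weight k x - pell_weight k y\<bar> + weight_dist k xs ys"
| "weight_dist k _ _ = 0"

lemma weight_dist_append:
  "length u = length v \<Longrightarrow> weight_dist k (u @ u') (v @ v') = weight_dist k u v + weight_dist k u' v'"
  by (induction u v rule: list_induct2) auto

lemma weight_dist_self [simp]: "weight_dist k u u = 0"
  by (induction u) auto

lemma weight_dist_commute: "weight_dist k u v = weight_dist k v u"
  by (induction k u v rule: weight_dist.induct) auto

lemma weight_dist_triangle:
  "length u = length v \<Longrightarrow> length v = length w \<Longrightarrow>
    weight_dist k u w \<le> weight_dist k u v + weight_dist k v w"
proof (induction u v arbitrary: w rule: list_induct2)
  case (Cons x xs y ys)
  then obtain z zs where "w = z # zs" by (cases w) auto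
  with Cons show ?case by fastforce
qed simp

lemma weight_dist_move:
  assumes "pell_move k u v"
  shows "weight_dist k u v \<le> 2"
  using assms unfolding pell_move_def
proof (elim disjE exE conjE)
  fix a b i
  assume "i + 2 \<le> k" "u = a @ [i] @ b" "v = a @ [i + 1] @ b"
  then show ?thesis by (simp add: weight_dist_append pell_weight_def)
next
  fix a b
  assume "u = a @ [k - 1, k - 1] @ b" "v = a @ [k, k] @ b"
  then show ?thesis by (cases k) (simp_all add: weight_dist_append pell_weight_def)
qed

lemma weight_dist_walk:
  "(pell_adj n k ^^ m) u v \<Longrightarrow> length u = n \<Longrightarrow> weight_dist k u v \<le> 2 * int m"
proof (induction m arbitrary: v)
  case (Suc m)
  then obtain y where y: "(pell_adj n k ^^ m) u y" "pell_adj n k y v" by (blast elim: relpowp_Suc_E)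
  have "weight_dist k y v \<le> 2"
    using y(2) weight_dist_move weight_dist_commute unfolding pell_adj_def by metis
  moreover have "length y = n" "length v = n"
    using y(2) unfolding pell_adj_def pell_vertices_def by auto
  ultimately have "weight_dist k u v \<le> weight_dist k u y + 2"
    using weight_dist_triangle[of u y v k] Suc.prems by simp
  with Suc y show ?case by fastforce
qed simp

text \<open>Each pair of letters gains at least 2 k in weight distance; a letter x < k followed by the
  token kk becomes 000. Only a final single letter may gain just k - 1.\<close>

fun antipode :: "nat \<Rightarrow> nat list \<Rightarrow> nat list" where
  "antipode k [] = []"
| "antipode k [x] = [if k \<le> 2 * x + 1 then 0 else k - 1]"
| "antipode k (x # y # r) =
    (if x < k \<and> y = k then 0 # 0 # 0 # antipode k (tl r)
     else if k \<le> x + y then 0 # 0 # antipode k r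
     else k # k # antipode k r)"

lemma pell_string_antipode: "0 < k \<Longrightarrow> pell_string k (antipode k u)"
  by (induction k u rule: antipode.induct) (auto intro!: pell_string.intros)

lemma length_antipode: "pell_string k u \<Longrightarrow> length (antipode k u) = length u"
proof (induction k u rule: antipode.induct)
  case (3 k x y r)
  from "3.prems" show ?case
    by (rule pell_string_Cons_Cons_cases) (use "3.IH" in auto)
qed auto

lemma weight_dist_antipode:
  "pell_string k u \<Longrightarrow> 2 \<le> k \<Longrightarrow> int (k * length u) \<le> weight_dist k u (antipode k u) + 1"
proof (induction k u rule: antipode.induct)
  case (2 k x)
  from "2.prems"(1) have "x < k" by (cases rule: pell_string.cases) auto
  then show ?case by (simp add: pell_weight_def)
next
  case (3 k x y r)
  from "3.prems"(1) show ?case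
  proof (cases rule: pell_string_Cons_Cons_cases)
    case 1
    with "3.IH"(2) "3.prems"(2) show ?thesis by (simp add: pell_weight_def algebra_simps)
  next
    case (2 r')
    with "3.IH"(1) "3.prems"(2) show ?thesis by (simp add: pell_weight_def algebra_simps)
  next
    case 3
    with "3.IH"(2,3) "3.prems"(2) show ?thesis
      by (cases "k \<le> x + y") (simp_all add: pell_weight_def algebra_simps)
  qed
qed simp

lemma pell_ecc_ge:
  assumes "u \<in> pell_vertices n k" "2 \<le> k"
  shows "k * n div 2 \<le> pell_ecc n k u"
proof -
  let ?v = "antipode k u"
  have v: "?v \<in> pell_vertices n k"
    using assms pell_string_antipode length_antipode unfolding pell_vertices_def by auto
  then obtain m where "(pell_adj n k ^^ m) u ?v" using pell_walk_exists assms by fastforce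
  then have "(pell_adj n k ^^ pell_dist n k u ?v) u ?v" by (rule pell_walk_pell_dist)
  then have "weight_dist k u ?v \<le> 2 * int (pell_dist n k u ?v)"
    using weight_dist_walk assms(1) unfolding pell_vertices_def by blast
  moreover have "int (k * n) \<le> weight_dist k u ?v + 1"
    using weight_dist_antipode assms unfolding pell_vertices_def by auto
  ultimately have "k * n div 2 \<le> pell_dist n k u ?v" by linarith
  also have "\<dots> \<le> pell_ecc n k u"
    unfolding pell_ecc_def using finite_pell_vertices v by (intro Max_ge) auto
  finally show ?thesis .
qed

theorem proposition4p1:
  fixes n k :: nat
  assumes "n \<ge> 1" and "k \<ge> 2"
  shows "pell_radius n k = (k * n) div 2"
proof -
  let ?c = "replicate n (k div 2)"
  have c: "?c \<in> pell_vertices n k"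
    using assms(2) unfolding pell_vertices_def by (simp add: pell_string_replicate)
  have "pell_ecc n k ?c = k * n div 2"
    using pell_ecc_center_le[of k n] pell_ecc_ge[OF c] assms(2) by simp
  then have "k * n div 2 \<in> pell_ecc n k ` pell_vertices n k"
    using c by (metis image_eqI)
  then show ?thesis
    unfolding pell_radius_def using pell_ecc_ge assms(2) finite_pell_vertices
    by (intro Min_eqI) auto
qed

end
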